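(* Let $(R,pR)$ be a discrete valuation domain with valuation $\mathsf{v}$ and finite residue field, $f\in R[x]$ non-constant and primitive with irreducible divisor set $\mathcal{P}$, and $n:=\mathsf{v}(\operatorname{d}(f))\ge 1$. Let $W\subseteq\mathcal{W}(f)$ be a set of representatives of $\mathcal{W}(f)$ modulo $p^{\lceil n/2\rceil}R$ (i.e. $W$ contains exactly one element of each residue class modulo $p^{\lceil n/2\rceil}R$ that meets $\mathcal{W}(f)$). Then for every $a\in\mathcal{W}(f)$ there exists $w\in W$ with $\mathsf{v}_{\mathcal{P}}(a)=\mathsf{v}_{\mathcal{P}}(w)$. In particular, the matrix in $\mathbb{Q}^{W\times\mathcal{P}}$ whose row indexed by $w$ is $\mathsf{v}_{\mathcal{P}}(w)$ has kernel equal to $\operatorname{fdk}(f)$.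
   Context: $\operatorname{d}(f)=\gcd(f(a)\mid a\in R)$, so $\mathsf{v}(\operatorname{d}(f))=\min_{a\in R}\mathsf{v}(f(a))$. Primitive means the coefficients generate $R$. An irreducible divisor set $\mathcal{P}$ of $f$ is a set of representatives of the associate classes of irreducible divisors of $f$ in $R[x]$. For $a\in R$, $\mathsf{v}_{\mathcal{P}}(a)=(\mathsf{v}(g(a)))_{g\in\mathcal{P}}$. $\mathcal{W}(f)=\{a\in R\mid \mathsf{v}(f(a))=\mathsf{v}(\operatorname{d}(f))\}$, and $\operatorname{fdk}(f)=\{(u_g)_{g\in\mathcal{P}}\in\mathbb{Q}^{\mathcal{P}}\mid \forall a\in\mathcal{W}(f):\sum_{g}u_g\,\mathsf{v}(g(a))=0\}$. *)

theory Defs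
  imports "HOL-Computational_Algebra.Polynomial"
begin

text \<open>(R, pR) is a discrete valuation domain with uniformizer p: p is a nonzero nonunit and
 every nonzero element is a unit times a power of p. The valuation is v = pval p.\<close>
definition dvd_uniformizer :: "'a::idom \<Rightarrow> bool" where
  "dvd_uniformizer p \<longleftrightarrow> p \<noteq> 0 \<and> \<not> p dvd 1 \<and>
     (\<forall>x. x \<noteq> 0 \<longrightarrow> (\<exists>u k. u dvd 1 \<and> x = u * p ^ k))"

definition pval :: "'a::idom \<Rightarrow> 'a \<Rightarrow> nat" where
  "pval p x = (if finite {n. p ^ n dvd x} then Max {n. p ^ n dvd x} else 0)"

definition finite_residue_field :: "'a::idom \<Rightarrow> bool" where
  "finite_residue_field p \<longleftrightarrow> finite ((\<lambda>x. {y. p dvd (x - y)}) ` UNIV)"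

text \<open>Primitive: the coefficients generate the unit ideal.\<close>
definition primitive_poly :: "'a::idom poly \<Rightarrow> bool" where
  "primitive_poly f \<longleftrightarrow> (\<exists>c. (\<Sum>i\<le>degree f. c i * coeff f i) = 1)"

text \<open>Irreducible divisor set: representatives of associate classes of irreducible divisors.\<close>
definition irred_divisor_set :: "'a::idom poly \<Rightarrow> 'a poly set \<Rightarrow> bool" where
  "irred_divisor_set f P \<longleftrightarrow>
     (\<forall>g\<in>P. irreducible g \<and> g dvd f) \<and>
     (\<forall>g. irreducible g \<and> g dvd f \<longrightarrow> (\<exists>h\<in>P. g dvd h \<and> h dvd g)) \<and>
     (\<forall>g\<in>P. \<forall>h\<in>P. g dvd h \<and> h dvd g \<longrightarrow> g = h)"

text \<open>v(d(f)) = min over a of v(f(a)), where v(0) = infinity (so zero values are ignored).\<close>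
definition vd :: "'a::idom \<Rightarrow> 'a poly \<Rightarrow> nat" where
  "vd p f = (LEAST k. \<exists>a. poly f a \<noteq> 0 \<and> pval p (poly f a) = k)"

definition Wset :: "'a::idom \<Rightarrow> 'a poly \<Rightarrow> 'a set" where
  "Wset p f = {a. poly f a \<noteq> 0 \<and> pval p (poly f a) = vd p f}"

text \<open>Vectors in Q^P are modelled as functions vanishing outside P.\<close>
definition fdk :: "'a::idom \<Rightarrow> 'a poly \<Rightarrow> 'a poly set \<Rightarrow> ('a poly \<Rightarrow> rat) set" where
  "fdk p f P = {u. (\<forall>g. g \<notin> P \<longrightarrow> u g = 0) \<and>
     (\<forall>a\<in>Wset p f. (\<Sum>g\<in>P. u g * of_nat (pval p (poly g a))) = 0)}"

end

theory Submission
  imports Defs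
begin

text \<open>Two elements congruent modulo p^m but of different valuations both have valuation at
least m. Let f = g h, let f(a) and f(w) both have valuation n, and let a and w be congruent
modulo p^m with n \<le> 2m; then so are g(a), g(w) and h(a), h(w). If the valuations of g(a) and
g(w) differed, those of h(a) and h(w) would differ as well, all four would be at least m, and
since each pair adds up to n \<le> 2m all four would equal m, a contradiction. So congruence
modulo p^(ceil(n/2)) preserves the valuation vector on W(f), and the kernel condition defining
fdk(f) need only be tested on representatives.\<close>

lemma diff_dvd_poly_diff:
  fixes g :: "'a::comm_ring_1 poly"
  shows "(a - w) dvd (poly g a - poly g w)"
proof -
  have "[:- w, 1:] dvd g - [:poly g w:]"
    using poly_eq_0_iff_dvd[of "g - [:poly g w:]" w] by simp
  then obtain q where q: "g - [:poly g w:] = [:- w, 1:] * q" by (elim dvdE)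
  have "poly (g - [:poly g w:]) a = (a - w) * poly q a"
    by (simp add: q algebra_simps)
  then show ?thesis by simp
qed

lemma power_dvd_unit_mult_power_iff:
  fixes p :: "'a::idom"
  assumes "dvd_uniformizer p" and "u dvd 1"
  shows "p ^ n dvd u * p ^ k \<longleftrightarrow> n \<le> k"
proof
  assume dvd: "p ^ n dvd u * p ^ k"
  show "n \<le> k"
  proof (rule ccontr)
    assume "\<not> n \<le> k"
    then have "p ^ (n - k) * p ^ k dvd u * p ^ k"
      using dvd by (simp flip: power_add)
    then have "p ^ (n - k) dvd 1"
      using assms by (auto simp: dvd_uniformizer_def intro: dvd_trans)
    moreover have "p dvd p ^ (n - k)"
      using \<open>\<not> n \<le> k\<close> by (simp add: dvd_power)
    ultimately show False
      using assms(1) by (auto simp: dvd_uniformizer_def dest: dvd_trans)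
  qed
qed (simp add: le_imp_power_dvd)

lemma pval_unit_mult_power:
  fixes p :: "'a::idom"
  assumes "dvd_uniformizer p" and "u dvd 1"
  shows "pval p (u * p ^ k) = k"
proof -
  have "{n. p ^ n dvd u * p ^ k} = {..k}"
    using power_dvd_unit_mult_power_iff[OF assms] by auto
  moreover have "Max {..k} = k"
    by (rule Max_eqI) auto
  ultimately show ?thesis by (simp add: pval_def)
qed

lemma unit_mult_power_pval:
  fixes p :: "'a::idom"
  assumes "dvd_uniformizer p" and "x \<noteq> 0"
  obtains u where "u dvd 1" and "x = u * p ^ pval p x"
  using assms pval_unit_mult_power[OF assms(1)] by (force simp: dvd_uniformizer_def)

lemma power_dvd_iff_le_pval:
  fixes p :: "'a::idom"
  assumes "dvd_uniformizer p" and "x \<noteq> 0"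
  shows "p ^ n dvd x \<longleftrightarrow> n \<le> pval p x"
  by (metis unit_mult_power_pval[OF assms] power_dvd_unit_mult_power_iff[OF assms(1)])

lemma pval_mult:
  fixes p :: "'a::idom"
  assumes U: "dvd_uniformizer p" and "x \<noteq> 0" and "y \<noteq> 0"
  shows "pval p (x * y) = pval p x + pval p y"
proof -
  obtain u where u: "u dvd 1" "x = u * p ^ pval p x"
    using unit_mult_power_pval[OF U \<open>x \<noteq> 0\<close>] .
  obtain v where v: "v dvd 1" "y = v * p ^ pval p y"
    using unit_mult_power_pval[OF U \<open>y \<noteq> 0\<close>] .
  have "x * y = (u * v) * p ^ (pval p x + pval p y)"
    by (subst u(2), subst v(2)) (simp add: power_add algebra_simps)
  moreover have "u * v dvd 1"
    using mult_dvd_mono[OF u(1) v(1)] by simp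
  ultimately show ?thesis
    using pval_unit_mult_power[OF U] by metis
qed

lemma pval_eq_if_power_dvd_diff:
  fixes p :: "'a::idom"
  assumes U: "dvd_uniformizer p" and x: "x \<noteq> 0" and y: "y \<noteq> 0"
    and dvd: "p ^ s dvd x - y" and less: "pval p x < s"
  shows "pval p x = pval p y"
proof -
  have dvd_diff_below: "p ^ k dvd x - y" if "k \<le> s" for k
    using dvd that le_imp_power_dvd dvd_trans by blast
  have "p ^ pval p x dvd x"
    using power_dvd_iff_le_pval[OF U x] by simp
  moreover have "p ^ pval p x dvd x - y"
    using dvd_diff_below less by simp
  ultimately have "p ^ pval p x dvd x - (x - y)"
    by (rule dvd_diff)
  then have "pval p x \<le> pval p y"
    using power_dvd_iff_le_pval[OF U y] by simp
  moreover have "\<not> Suc (pval p x) \<le> pval p y"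
  proof
    assume "Suc (pval p x) \<le> pval p y"
    then have "p ^ Suc (pval p x) dvd y"
      using power_dvd_iff_le_pval[OF U y] by blast
    moreover have "p ^ Suc (pval p x) dvd x - y"
      using dvd_diff_below less Suc_leI by blast
    ultimately have "p ^ Suc (pval p x) dvd y + (x - y)"
      by (rule dvd_add)
    then show False
      using power_dvd_iff_le_pval[OF U x, of "Suc (pval p x)"] by simp
  qed
  ultimately show ?thesis by simp
qed

lemma pval_poly_divisor_eq:
  fixes p :: "'a::idom"
  assumes U: "dvd_uniformizer p" and "g dvd f"
    and a: "poly f a \<noteq> 0" and w: "poly f w \<noteq> 0"
    and "pval p (poly f a) = n" and "pval p (poly f w) = n"
    and dvd: "p ^ m dvd a - w" and "n \<le> 2 * m"
  shows "pval p (poly g a) = pval p (poly g w)"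
proof (rule ccontr)
  assume neq: "pval p (poly g a) \<noteq> pval p (poly g w)"
  obtain h where f: "f = g * h" using \<open>g dvd f\<close> by (elim dvdE)
  have nonzero: "poly g a \<noteq> 0" "poly h a \<noteq> 0" "poly g w \<noteq> 0" "poly h w \<noteq> 0"
    using a w f by auto
  have split_a: "n = pval p (poly g a) + pval p (poly h a)"
    and split_w: "n = pval p (poly g w) + pval p (poly h w)"
    using assms f pval_mult[OF U] nonzero by auto
  have at_least_m: "m \<le> pval p (poly k a)" "m \<le> pval p (poly k w)"
    if "k \<in> {g, h}" and "pval p (poly k a) \<noteq> pval p (poly k w)" for k
  proof -
    have "p ^ m dvd poly k a - poly k w"
      using dvd diff_dvd_poly_diff dvd_trans by blast
    moreover from this have "p ^ m dvd poly k w - poly k a"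
      by (metis dvd_minus_iff minus_diff_eq)
    moreover have "poly k a \<noteq> 0" "poly k w \<noteq> 0"
      using that(1) nonzero by auto
    ultimately show "m \<le> pval p (poly k a)" "m \<le> pval p (poly k w)"
      using that(2) pval_eq_if_power_dvd_diff[OF U] not_le by metis+
  qed
  have "pval p (poly h a) \<noteq> pval p (poly h w)"
    using split_a split_w neq by simp
  then show False
    using at_least_m[of g] at_least_m[of h] neq split_a split_w \<open>n \<le> 2 * m\<close> by auto
qed

lemma fdk_eq_kernel_on_representatives:
  assumes "W \<subseteq> Wset p f"
    and "\<forall>a\<in>Wset p f. \<exists>w\<in>W. \<forall>g\<in>P. pval p (poly g a) = pval p (poly g w)"
  shows "{u :: 'a::idom poly \<Rightarrow> rat. (\<forall>g. g \<notin> P \<longrightarrow> u g = 0) \<and>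
           (\<forall>w\<in>W. (\<Sum>g\<in>P. u g * of_nat (pval p (poly g w))) = 0)} = fdk p f P"
proof -
  have "(\<forall>a\<in>Wset p f. (\<Sum>g\<in>P. u g * of_nat (pval p (poly g a))) = 0)"
    if "\<forall>w\<in>W. (\<Sum>g\<in>P. u g * of_nat (pval p (poly g w))) = 0" for u :: "'a poly \<Rightarrow> rat"
  proof
    fix a assume "a \<in> Wset p f"
    then obtain w where "w \<in> W" and "\<forall>g\<in>P. pval p (poly g a) = pval p (poly g w)"
      using assms(2) by blast
    then show "(\<Sum>g\<in>P. u g * of_nat (pval p (poly g a))) = 0"
      using that by (simp cong: sum.cong)
  qed
  then show ?thesis
    using assms(1) by (auto simp: fdk_def)
qed

theorem lemma4p4:
  fixes p :: "'a::idom" and f :: "'a poly" and P :: "'a poly set" and W :: "'a set"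
  assumes "dvd_uniformizer p"
    and "finite_residue_field p"
    and "degree f \<ge> 1"
    and "primitive_poly f"
    and "irred_divisor_set f P"
    and "vd p f \<ge> 1"
    and "W \<subseteq> Wset p f"
    and "\<forall>a\<in>Wset p f. \<exists>w\<in>W. p ^ ((vd p f + 1) div 2) dvd (a - w)"
    and "\<forall>w1\<in>W. \<forall>w2\<in>W. p ^ ((vd p f + 1) div 2) dvd (w1 - w2) \<longrightarrow> w1 = w2"
  shows "(\<forall>a\<in>Wset p f. \<exists>w\<in>W. \<forall>g\<in>P.
            pval p (poly g a) = pval p (poly g w))
         \<and> {u :: 'a poly \<Rightarrow> rat. (\<forall>g. g \<notin> P \<longrightarrow> u g = 0) \<and>
              (\<forall>w\<in>W. (\<Sum>g\<in>P. u g * of_nat (pval p (poly g w))) = 0)} = fdk p f P"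
proof -
  have same_vector: "\<forall>a\<in>Wset p f. \<exists>w\<in>W. \<forall>g\<in>P. pval p (poly g a) = pval p (poly g w)"
  proof
    fix a assume a: "a \<in> Wset p f"
    then obtain w where "w \<in> W" and close: "p ^ ((vd p f + 1) div 2) dvd a - w"
      using assms(8) by blast
    moreover have "pval p (poly g a) = pval p (poly g w)" if "g \<in> P" for g
    proof (rule pval_poly_divisor_eq[OF assms(1) _ _ _ _ _ close])
      show "g dvd f" using assms(5) that by (simp add: irred_divisor_set_def)
    qed (use a \<open>w \<in> W\<close> assms(7) in \<open>auto simp: Wset_def\<close>)
    ultimately show "\<exists>w\<in>W. \<forall>g\<in>P. pval p (poly g a) = pval p (poly g w)" by blast
  qed
  show ?thesis
    using same_vector fdk_eq_kernel_on_representatives[OF assms(7) same_vector] by blast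
qed

end
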